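(* Let $r,s\ge 1$ and let $A=(A_{ij})_{i,j=1}^r$ be an $rs\times rs$ matrix with non-negative entries, written in $s\times s$ blocks $A_{ij}$, which is a disoriented $(r,s)$-block circulant matrix. Suppose that \[ \left( \sum_{j=1}^r A_{1j} \right) \mathbf{J}_s = \mathbf{J}_s \left( \sum_{j=1}^r A_{1j} \right). \] Then $\rho(A) = \rho\left(\sum_{j=1}^r A_{1j} \right)$.
   Context: $\rho(M)$ denotes the spectral radius of a square matrix $M$. $\mathbf{J}_s$ denotes the $s\times s$ $(0,1)$-matrix with ones exactly on the anti-diagonal. An $(r,s)$-block circulant matrix is an $rs\times rs$ matrix in $s\times s$ blocks of the form whose first block row is $(B_1\ B_2\ \dots\ B_r)$ and whose $i$-th block row is the first block row cyclically shifted $i-1$ places to the right (so block $(i,j)$ is $B_{[j-i+1]_r}$, indices mod $r$ in $\{1,\dots,r\}$). An $(r,s)$-disoriented block circulant matrix is a block matrix $A=(A_{ij})_{i,j=1}^r$ with $s\times s$ blocks for which there is an $(r,s)$-block circulant matrix $\widetilde A=(\widetilde A_{ij})$ with the same first block row ($\widetilde A_{1j}=A_{1j}$ for all $j$) such that for each $i\in\{2,\dots,r\}$ either $A_{ij}=\widetilde A_{ij}$ for all $j=1,\dots,r$, or $A_{ij}=\mathbf{J}_s\widetilde A_{ij}$ for all $j=1,\dots,r$. *)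

theory Defs
  imports "Jordan_Normal_Form.Spectral_Radius"
begin

text \<open>Conventions: block indices and matrix indices are 0-based.
  A real (r*s)x(r*s) matrix M is viewed as an r x r array of s x s blocks.\<close>

definition blk :: "nat \<Rightarrow> real mat \<Rightarrow> nat \<Rightarrow> nat \<Rightarrow> real mat" where
  "blk s M i j = mat s s (\<lambda>(a,b). M $$ (i*s + a, j*s + b))"

definition antidiag :: "nat \<Rightarrow> real mat" where
  "antidiag s = mat s s (\<lambda>(a,b). if a + b = s - 1 then 1 else 0)"

definition block_circulant :: "nat \<Rightarrow> nat \<Rightarrow> real mat \<Rightarrow> bool" where
  "block_circulant r s M \<longleftrightarrow> M \<in> carrier_mat (r*s) (r*s) \<and>
     (\<forall>i<r. \<forall>j<r. blk s M i j = blk s M 0 ((j + r - i) mod r))"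

definition disoriented_block_circulant :: "nat \<Rightarrow> nat \<Rightarrow> real mat \<Rightarrow> bool" where
  "disoriented_block_circulant r s A \<longleftrightarrow> A \<in> carrier_mat (r*s) (r*s) \<and>
     (\<exists>At. block_circulant r s At \<and> (\<forall>j<r. blk s A 0 j = blk s At 0 j) \<and>
        (\<forall>i. 1 \<le> i \<and> i < r \<longrightarrow>
            (\<forall>j<r. blk s A i j = blk s At i j) \<or>
            (\<forall>j<r. blk s A i j = antidiag s * blk s At i j)))"

definition first_row_block_sum :: "nat \<Rightarrow> nat \<Rightarrow> real mat \<Rightarrow> real mat" where
  "first_row_block_sum r s A = mat s s (\<lambda>(a,b). \<Sum>j<r. A $$ (a, j*s + b))"

definition rho :: "real mat \<Rightarrow> real" where
  "rho M = spectral_radius (map_mat complex_of_real M)"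

end

theory Submission
  imports Defs
begin

text \<open>Let \<open>B\<close> be the sum of the first block row. Up to the reflection \<open>J\<^sub>s\<close> of its rows,
  every block row of \<open>A\<close> is a cyclic rotation of the first one, so \<open>A\<close> acts on the \<open>r\<close>-fold
  repetition of a \<open>J\<^sub>s\<close>-invariant vector \<open>w\<close> as \<open>B\<close> acts on \<open>w\<close>; as \<open>B\<close> commutes with
  \<open>J\<^sub>s\<close>, it preserves \<open>J\<^sub>s\<close>-invariance. Hence \<open>A\<^sup>k 1\<close> is the repetition of \<open>B\<^sup>k 1\<close>, i.e. the
  row sums of \<open>A\<^sup>k\<close> and \<open>B\<^sup>k\<close> coincide. For nonnegative matrices the row sums of a power
  control all its entries up to a factor given by the dimension, and the spectral radius is
  the exponential growth rate of the entries of the powers, so \<open>\<rho>(A) = \<rho>(B)\<close>.\<close>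

lemma pow_smult_mat:
  fixes N :: "'a::comm_ring_1 mat"
  assumes "N \<in> carrier_mat n n"
  shows "(c \<cdot>\<^sub>m N) ^\<^sub>m k = c ^ k \<cdot>\<^sub>m N ^\<^sub>m k"
proof (induction k)
  case 0
  show ?case using assms by (auto intro!: eq_matI)
next
  case (Suc k)
  then show ?case using assms
    by (simp add: mult_smult_assoc_mat[of _ n n _ n] mult_smult_distrib[of _ n n _ n])
       (auto intro!: eq_matI)
qed

lemma eigenvalue_smult_mat:
  fixes N :: "'a::comm_ring_1 mat"
  assumes N: "N \<in> carrier_mat n n" and ev: "eigenvalue N ev"
  shows "eigenvalue (c \<cdot>\<^sub>m N) (c * ev)"
proof -
  obtain v where v: "eigenvector N v ev" using ev unfolding eigenvalue_def by blast
  then have vc: "v \<in> carrier_vec n" using N unfolding eigenvector_def by auto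
  have "(c \<cdot>\<^sub>m N) *\<^sub>v v = c \<cdot>\<^sub>v (N *\<^sub>v v)"
    using N vc by (auto intro!: eq_vecI simp: scalar_prod_def sum_distrib_left ac_simps)
  also have "\<dots> = (c * ev) \<cdot>\<^sub>v v"
    using v unfolding eigenvector_def by (auto simp: smult_smult_assoc)
  finally have "eigenvector (c \<cdot>\<^sub>m N) v (c * ev)"
    using v N unfolding eigenvector_def by auto
  then show ?thesis unfolding eigenvalue_def by blast
qed

lemma spectral_radius_nonneg:
  assumes "N \<in> carrier_mat n n" and "n > 0"
  shows "spectral_radius N \<ge> 0"
  using spectral_radius_mem_max(1)[OF assms] by auto

lemma pow_norm_bound_if_spectral_radius_less:
  fixes N :: "complex mat"
  assumes N: "N \<in> carrier_mat n n" and n: "n > 0" and lt: "spectral_radius N < t"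
  obtains c where "\<And>k. norm_bound (N ^\<^sub>m k) (c * t ^ k)"
proof -
  have t: "t > 0" using spectral_radius_nonneg[OF N n] lt by linarith
  define N' where "N' = complex_of_real (1 / t) \<cdot>\<^sub>m N"
  have N': "N' \<in> carrier_mat n n" unfolding N'_def using N by simp
  have N_N': "N = complex_of_real t \<cdot>\<^sub>m N'"
    unfolding N'_def using t by (auto intro!: eq_matI)
  have "norm ev < 1" if "ev \<in> spectrum N'" for ev
  proof -
    have "eigenvalue N (complex_of_real t * ev)"
      unfolding N_N' using eigenvalue_smult_mat[OF N'] that unfolding spectrum_def by simp
    then have "t * norm ev \<le> spectral_radius N"
      using spectral_radius_mem_max(2)[OF N n] t unfolding spectrum_def by (force simp: norm_mult)
    then have "t * norm ev < t * 1" using lt by linarith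
    then show ?thesis using t by simp
  qed
  then have "spectral_radius N' < 1" using spectral_radius_mem_max(1)[OF N' n] by auto
  then obtain c where c: "\<And>k. norm_bound (N' ^\<^sub>m k) c"
    using spectral_radius_jnf_norm_bound_less_1_upper_triangular[OF N'] by auto
  have "norm_bound (N ^\<^sub>m k) (c * t ^ k)" for k
  proof
    fix i j assume "i < dim_row (N ^\<^sub>m k)" "j < dim_col (N ^\<^sub>m k)"
    then have ij: "i < n" "j < n" using N by (auto split: if_splits)
    then have "norm ((N' ^\<^sub>m k) $$ (i, j)) \<le> c" using c[of k] N' unfolding norm_bound_def by auto
    then show "norm ((N ^\<^sub>m k) $$ (i, j)) \<le> c * t ^ k"
      unfolding N_N' pow_smult_mat[OF N'] using ij N' t
      by (simp add: norm_mult norm_power mult.commute mult_left_mono)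
  qed
  then show ?thesis by (rule that)
qed

lemma spectral_radius_le_if_pow_norm_bound:
  fixes M :: "complex mat"
  assumes M: "M \<in> carrier_mat n n" and n: "n > 0" and t: "t > 0"
    and bound: "\<And>k. norm_bound (M ^\<^sub>m k) (c * t ^ k)"
  shows "spectral_radius M \<le> t"
proof (rule ccontr)
  assume "\<not> spectral_radius M \<le> t"
  obtain ev where ev: "ev \<in> spectrum M" and "spectral_radius M = norm ev"
    using spectral_radius_mem_max(1)[OF M n] by auto
  with \<open>\<not> spectral_radius M \<le> t\<close> have q: "norm ev / t > 1" using t by simp
  obtain v where v: "eigenvector M v ev" using ev unfolding spectrum_def eigenvalue_def by auto
  then have vc: "v \<in> carrier_vec n" and "v \<noteq> 0\<^sub>v n" using M unfolding eigenvector_def by auto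
  then obtain i where i: "i < n" and vi: "v $ i \<noteq> 0" by (auto simp: vec_eq_iff)
  define S where "S = (\<Sum>j<n. norm (v $ j))"
  have growth: "norm ev ^ k * norm (v $ i) \<le> c * S * t ^ k" for k
  proof -
    have "ev ^ k * v $ i = (M ^\<^sub>m k *\<^sub>v v) $ i"
      using eigenvector_pow[OF M v, of k] i vc by simp
    also have "\<dots> = (\<Sum>j<n. (M ^\<^sub>m k) $$ (i, j) * v $ j)"
      using i vc M by (simp add: scalar_prod_def lessThan_atLeast0)
    finally have "ev ^ k * v $ i = (\<Sum>j<n. (M ^\<^sub>m k) $$ (i, j) * v $ j)" .
    then have "norm (ev ^ k * v $ i) \<le> (\<Sum>j<n. norm ((M ^\<^sub>m k) $$ (i, j)) * norm (v $ j))"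
      by (metis (no_types, lifting) norm_mult norm_sum sum.cong)
    also have "\<dots> \<le> (\<Sum>j<n. c * t ^ k * norm (v $ j))"
      using bound[of k] i M unfolding norm_bound_def by (intro sum_mono mult_right_mono) auto
    finally show ?thesis unfolding S_def by (simp add: norm_mult norm_power sum_distrib_left ac_simps)
  qed
  obtain k where k: "c * S / norm (v $ i) < (norm ev / t) ^ k"
    using real_arch_pow[OF q] by blast
  have "(norm ev / t) ^ k * norm (v $ i) \<le> c * S"
    using growth[of k] t by (simp add: power_divide divide_le_eq mult.commute mult.left_commute)
  with k vi show False by (simp add: divide_less_eq)
qed

lemma norm_bound_of_real_mat: "norm_bound (map_mat complex_of_real P) d \<longleftrightarrow> norm_bound P d"
  unfolding norm_bound_def by simp

lemma rho_le_if_pow_dominated: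
  fixes M N :: "real mat"
  assumes M: "M \<in> carrier_mat n n" and N: "N \<in> carrier_mat m m" and "n > 0" "m > 0"
    and dominated: "\<And>k d. norm_bound (N ^\<^sub>m k) d \<Longrightarrow> norm_bound (M ^\<^sub>m k) (C * d)"
  shows "rho M \<le> rho N"
  unfolding rho_def
proof (rule dense_ge)
  fix t assume lt: "spectral_radius (map_mat complex_of_real N) < t"
  have Mc: "map_mat complex_of_real M \<in> carrier_mat n n" and Nc: "map_mat complex_of_real N \<in> carrier_mat m m"
    using M N by auto
  have t: "t > 0" using spectral_radius_nonneg[OF Nc \<open>m > 0\<close>] lt by linarith
  obtain c where "\<And>k. norm_bound (map_mat complex_of_real N ^\<^sub>m k) (c * t ^ k)"
    using pow_norm_bound_if_spectral_radius_less[OF Nc \<open>m > 0\<close> lt] by blast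
  then have "norm_bound (map_mat complex_of_real M ^\<^sub>m k) ((C * c) * t ^ k)" for k
    using dominated[of k] M N
    by (simp add: of_real_hom.mat_hom_pow[symmetric] norm_bound_of_real_mat mult.assoc)
  then show "spectral_radius (map_mat complex_of_real M) \<le> t"
    by (rule spectral_radius_le_if_pow_norm_bound[OF Mc \<open>n > 0\<close> t])
qed

definition nonneg_mat :: "'a::{zero,ord} mat \<Rightarrow> bool" where
  "nonneg_mat P \<longleftrightarrow> (\<forall>i<dim_row P. \<forall>j<dim_col P. P $$ (i, j) \<ge> 0)"

lemma nonneg_mat_pow:
  fixes P :: "'a::linordered_semidom mat"
  assumes P: "P \<in> carrier_mat n n" and nonneg: "nonneg_mat P"
  shows "nonneg_mat (P ^\<^sub>m k)"
proof (induction k)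
  case 0
  show ?case using P by (simp add: nonneg_mat_def)
next
  case (Suc k)
  have "(P ^\<^sub>m k * P) $$ (i, j) \<ge> 0" if "i < n" "j < n" for i j
    using that Suc nonneg P unfolding nonneg_mat_def
    by (auto simp: scalar_prod_def intro!: sum_nonneg mult_nonneg_nonneg)
  then show ?case using P by (simp add: nonneg_mat_def)
qed

lemma nonneg_mat_index_le_row_sum:
  fixes P :: "'a::linordered_semidom mat"
  assumes "nonneg_mat P" and "i < dim_row P" and "j < dim_col P"
  shows "P $$ (i, j) \<le> (P *\<^sub>v vec (dim_col P) (\<lambda>_. 1)) $ i"
proof -
  have "P $$ (i, j) \<le> (\<Sum>c<dim_col P. P $$ (i, c))"
    using assms unfolding nonneg_mat_def by (intro member_le_sum) auto
  then show ?thesis using assms by (simp add: scalar_prod_def lessThan_atLeast0)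
qed

lemma row_sum_le_if_norm_bound:
  fixes P :: "real mat"
  assumes "norm_bound P d" and "i < dim_row P"
  shows "(P *\<^sub>v vec (dim_col P) (\<lambda>_. 1)) $ i \<le> real (dim_col P) * d"
proof -
  have "(P *\<^sub>v vec (dim_col P) (\<lambda>_. 1)) $ i = (\<Sum>c<dim_col P. P $$ (i, c))"
    using assms by (simp add: scalar_prod_def lessThan_atLeast0)
  also have "\<dots> \<le> (\<Sum>c<dim_col P. d)"
    using assms unfolding norm_bound_def by (intro sum_mono) (auto intro: abs_le_D1)
  finally show ?thesis by simp
qed

lemma rho_le_if_pow_row_sums_le:
  fixes M N :: "real mat"
  assumes M: "M \<in> carrier_mat n n" and N: "N \<in> carrier_mat m m" and "n > 0" "m > 0"
    and nonneg: "nonneg_mat M"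
    and row_sums: "\<And>k i. i < n \<Longrightarrow>
      \<exists>i'<m. (M ^\<^sub>m k *\<^sub>v vec n (\<lambda>_. 1)) $ i \<le> (N ^\<^sub>m k *\<^sub>v vec m (\<lambda>_. 1)) $ i'"
  shows "rho M \<le> rho N"
proof (rule rho_le_if_pow_dominated[OF M N \<open>n > 0\<close> \<open>m > 0\<close>])
  fix k d assume bound: "norm_bound (N ^\<^sub>m k) d"
  show "norm_bound (M ^\<^sub>m k) (real m * d)"
  proof
    fix i j assume "i < dim_row (M ^\<^sub>m k)" "j < dim_col (M ^\<^sub>m k)"
    then have ij: "i < n" "j < n" using M by (auto split: if_splits)
    have dims: "dim_row (M ^\<^sub>m k) = n" "dim_col (M ^\<^sub>m k) = n"
      "dim_row (N ^\<^sub>m k) = m" "dim_col (N ^\<^sub>m k) = m"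
      using M N by auto
    have nonneg_k: "nonneg_mat (M ^\<^sub>m k)" using nonneg_mat_pow[OF M nonneg] .
    obtain i' where i': "i' < m"
      and le: "(M ^\<^sub>m k *\<^sub>v vec n (\<lambda>_. 1)) $ i \<le> (N ^\<^sub>m k *\<^sub>v vec m (\<lambda>_. 1)) $ i'"
      using row_sums[OF ij(1)] by blast
    have "norm ((M ^\<^sub>m k) $$ (i, j)) = (M ^\<^sub>m k) $$ (i, j)"
      using nonneg_k ij M unfolding nonneg_mat_def by simp
    also have "\<dots> \<le> (M ^\<^sub>m k *\<^sub>v vec n (\<lambda>_. 1)) $ i"
      using nonneg_mat_index_le_row_sum[OF nonneg_k, of i j] ij unfolding dims .
    also have "\<dots> \<le> (N ^\<^sub>m k *\<^sub>v vec m (\<lambda>_. 1)) $ i'" by (rule le)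
    also have "\<dots> \<le> real m * d"
      using row_sum_le_if_norm_bound[OF bound, of i'] i' unfolding dims .
    finally show "norm ((M ^\<^sub>m k) $$ (i, j)) \<le> real m * d" .
  qed
qed

lemma block_index_less:
  fixes j b r s :: nat
  assumes "j < r" and "b < s"
  shows "j * s + b < r * s"
proof -
  have "j * s + b < Suc j * s" using assms(2) by simp
  also have "\<dots> \<le> r * s" using assms(1) by (intro mult_le_mono1) simp
  finally show ?thesis .
qed

lemma sum_lessThan_mult_blocks:
  fixes f :: "nat \<Rightarrow> 'a::comm_monoid_add"
  shows "(\<Sum>l<r * s. f l) = (\<Sum>j<r. \<Sum>b<s. f (j * s + b))"
  by (simp add: sum.nat_group[symmetric] sum.atLeastLessThan_shift_bounds[of _ 0 _ s, simplified]
      atLeast0LessThan add.commute comp_def)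

lemma sum_lessThan_rotate:
  fixes f :: "nat \<Rightarrow> 'a::comm_monoid_add"
  assumes "k < r"
  shows "(\<Sum>j<r. f ((j + r - k) mod r)) = (\<Sum>j<r. f j)"
proof (rule sum.reindex_bij_witness[where i="\<lambda>j. (j + k) mod r" and j="\<lambda>j. (j + r - k) mod r"])
  fix a assume a: "a \<in> {..<r}"
  have "((a + r - k) mod r + k) mod r = (a + r - k + k) mod r" by (simp add: mod_add_left_eq)
  also have "\<dots> = a" using a assms by simp
  finally show "((a + r - k) mod r + k) mod r = a" .
  have "((a + k) mod r + r - k) mod r = ((a + k) mod r + (r - k)) mod r" using assms by simp
  also have "\<dots> = (a + k + (r - k)) mod r" by (simp add: mod_add_left_eq)
  also have "\<dots> = a" using a assms by simp
  finally show "((a + k) mod r + r - k) mod r = a" .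
qed (use assms in auto)

lemma index_antidiag_mult:
  assumes "X \<in> carrier_mat s s" and "a < s" and "b < s"
  shows "(antidiag s * X) $$ (a, b) = X $$ (s - 1 - a, b)"
proof -
  have "(antidiag s * X) $$ (a, b) = (\<Sum>c<s. (if a + c = s - 1 then 1 else 0) * X $$ (c, b))"
    using assms by (simp add: antidiag_def scalar_prod_def lessThan_atLeast0)
  also have "\<dots> = (\<Sum>c<s. if c = s - 1 - a then X $$ (c, b) else 0)"
    using assms by (intro sum.cong) auto
  finally show ?thesis using assms by simp
qed

lemma index_mult_antidiag:
  assumes "X \<in> carrier_mat s s" and "a < s" and "b < s"
  shows "(X * antidiag s) $$ (a, b) = X $$ (a, s - 1 - b)"
proof -
  have "(X * antidiag s) $$ (a, b) = (\<Sum>c<s. X $$ (a, c) * (if c + b = s - 1 then 1 else 0))"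
    using assms by (simp add: antidiag_def scalar_prod_def lessThan_atLeast0)
  also have "\<dots> = (\<Sum>c<s. if c = s - 1 - b then X $$ (a, c) else 0)"
    using assms by (intro sum.cong) auto
  finally show ?thesis using assms by simp
qed

definition palindromic :: "'a vec \<Rightarrow> bool" where
  "palindromic w \<longleftrightarrow> (\<forall>a<dim_vec w. w $ (dim_vec w - 1 - a) = w $ a)"

lemma palindromic_mult_mat_vec:
  assumes B: "B \<in> carrier_mat s s" and comm: "B * antidiag s = antidiag s * B"
    and w: "w \<in> carrier_vec s" and pal: "palindromic w"
  shows "palindromic (B *\<^sub>v w)"
  unfolding palindromic_def
proof (intro allI impI)
  fix a assume "a < dim_vec (B *\<^sub>v w)"
  then have a: "a < s" using B by simp
  have "B $$ (s - 1 - a, b) = B $$ (a, s - 1 - b)" if b: "b < s" for b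
    using index_antidiag_mult[OF B a b] index_mult_antidiag[OF B a b] comm by simp
  then have "(\<Sum>b<s. B $$ (s - 1 - a, b) * w $ b) = (\<Sum>b<s. B $$ (a, s - Suc b) * w $ (s - Suc b))"
    using pal w unfolding palindromic_def by (intro sum.cong) auto
  also have "\<dots> = (\<Sum>b<s. B $$ (a, b) * w $ b)"
    by (rule sum.nat_diff_reindex)
  finally show "(B *\<^sub>v w) $ (dim_vec (B *\<^sub>v w) - 1 - a) = (B *\<^sub>v w) $ a"
    using B w a by (simp add: scalar_prod_def lessThan_atLeast0)
qed

lemma index_blk: "a < s \<Longrightarrow> b < s \<Longrightarrow> blk s X i j $$ (a, b) = X $$ (i * s + a, j * s + b)"
  by (simp add: blk_def)

lemma blk_carrier: "blk s X i j \<in> carrier_mat s s"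
  by (simp add: blk_def)

text \<open>The flag \<open>f\<close> records whether block row \<open>i\<close> is the reflected (\<open>J\<^sub>s\<close>-multiplied) one.\<close>

lemma disoriented_block_circulant_index:
  assumes dis: "disoriented_block_circulant r s A" and i: "i < r"
  obtains f where "\<And>a j b. a < s \<Longrightarrow> j < r \<Longrightarrow> b < s \<Longrightarrow>
    A $$ (i * s + a, j * s + b) = A $$ (if f then s - 1 - a else a, ((j + r - i) mod r) * s + b)"
proof -
  obtain At where circ: "block_circulant r s At" and first: "\<forall>j<r. blk s A 0 j = blk s At 0 j"
    and rows: "\<forall>i. 1 \<le> i \<and> i < r \<longrightarrow>
            (\<forall>j<r. blk s A i j = blk s At i j) \<or> (\<forall>j<r. blk s A i j = antidiag s * blk s At i j)"
    using dis unfolding disoriented_block_circulant_def by blast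
  obtain f where f: "\<And>j. j < r \<Longrightarrow> blk s A i j = (if f then antidiag s else 1\<^sub>m s) * blk s At i j"
  proof (cases "i = 0")
    case True
    then show ?thesis using that[of False] first by (simp add: left_mult_one_mat[OF blk_carrier])
  next
    case False
    then have "(\<forall>j<r. blk s A i j = blk s At i j) \<or> (\<forall>j<r. blk s A i j = antidiag s * blk s At i j)"
      using rows i by simp
    then show ?thesis
    proof
      assume "\<forall>j<r. blk s A i j = blk s At i j"
      then show ?thesis using that[of False] by (simp add: left_mult_one_mat[OF blk_carrier])
    next
      assume "\<forall>j<r. blk s A i j = antidiag s * blk s At i j"
      then show ?thesis using that[of True] by simp
    qed
  qed
  have "A $$ (i * s + a, j * s + b) = A $$ (if f then s - 1 - a else a, ((j + r - i) mod r) * s + b)"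
    if ab: "a < s" "j < r" "b < s" for a j b
  proof -
    define a' where "a' = (if f then s - 1 - a else a)"
    define k where "k = (j + r - i) mod r"
    have a': "a' < s" and k: "k < r" using ab i unfolding a'_def k_def by auto
    have "A $$ (i * s + a, j * s + b) = blk s A i j $$ (a, b)"
      using index_blk[OF ab(1,3)] by simp
    also have "\<dots> = ((if f then antidiag s else 1\<^sub>m s) * blk s At i j) $$ (a, b)"
      using f[OF ab(2)] by simp
    also have "\<dots> = blk s At i j $$ (a', b)"
      unfolding a'_def using ab by (simp add: index_antidiag_mult blk_carrier left_mult_one_mat[OF blk_carrier])
    also have "\<dots> = blk s At 0 k $$ (a', b)"
    proof -
      have "blk s At i j = blk s At 0 k"
        using circ i ab(2) unfolding block_circulant_def k_def by blast
      then show ?thesis by simp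
    qed
    also have "\<dots> = blk s A 0 k $$ (a', b)"
      using first k by simp
    also have "\<dots> = A $$ (a', k * s + b)"
      using index_blk[OF a' ab(3)] by simp
    finally show ?thesis unfolding a'_def k_def .
  qed
  then show ?thesis by (rule that)
qed

lemma first_row_block_sum_carrier: "first_row_block_sum r s A \<in> carrier_mat s s"
  by (simp add: first_row_block_sum_def)

lemma nonneg_first_row_block_sum:
  assumes "A \<in> carrier_mat (r * s) (r * s)" and "nonneg_mat A"
  shows "nonneg_mat (first_row_block_sum r s A)"
proof -
  have "A $$ (a, j * s + b) \<ge> 0" if "a < s" "j < r" "b < s" for a j b
  proof -
    have "a < r * s" using block_index_less[of 0 r a s] that by simp
    then show ?thesis using assms block_index_less[OF that(2,3)] unfolding nonneg_mat_def by simp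
  qed
  then show ?thesis unfolding nonneg_mat_def first_row_block_sum_def by (auto intro!: sum_nonneg)
qed

definition tile_vec :: "nat \<Rightarrow> nat \<Rightarrow> 'a vec \<Rightarrow> 'a vec" where
  "tile_vec r s w = vec (r * s) (\<lambda>l. w $ (l mod s))"

lemma tile_vec_carrier: "tile_vec r s w \<in> carrier_vec (r * s)"
  by (simp add: tile_vec_def)

lemma disoriented_block_circulant_mult_tile_vec:
  assumes dis: "disoriented_block_circulant r s A"
    and comm: "first_row_block_sum r s A * antidiag s = antidiag s * first_row_block_sum r s A"
    and w: "w \<in> carrier_vec s" and pal: "palindromic w"
  shows "A *\<^sub>v tile_vec r s w = tile_vec r s (first_row_block_sum r s A *\<^sub>v w)"
proof (rule eq_vecI)
  let ?B = "first_row_block_sum r s A"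
  have A: "A \<in> carrier_mat (r * s) (r * s)"
    using dis unfolding disoriented_block_circulant_def by blast
  then show "dim_vec (A *\<^sub>v tile_vec r s w) = dim_vec (tile_vec r s (?B *\<^sub>v w))"
    by (simp add: tile_vec_def)
  fix l assume "l < dim_vec (tile_vec r s (?B *\<^sub>v w))"
  then have l: "l < r * s" by (simp add: tile_vec_def)
  then have "s > 0" by (cases s) auto
  define i where "i = l div s"
  define a where "a = l mod s"
  have i: "i < r" and a: "a < s" and l_ia: "l = i * s + a"
    using l \<open>s > 0\<close> unfolding i_def a_def by (auto simp: less_mult_imp_div_less)
  obtain f where f: "\<And>a j b. a < s \<Longrightarrow> j < r \<Longrightarrow> b < s \<Longrightarrow>
      A $$ (i * s + a, j * s + b) = A $$ (if f then s - 1 - a else a, ((j + r - i) mod r) * s + b)"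
    using disoriented_block_circulant_index[OF dis i] by blast
  define c where "c = (if f then s - 1 - a else a)"
  have c: "c < s" using a unfolding c_def by auto
  have "(A *\<^sub>v tile_vec r s w) $ l = (\<Sum>l'<r * s. A $$ (l, l') * w $ (l' mod s))"
    using A l by (simp add: tile_vec_def scalar_prod_def lessThan_atLeast0)
  also have "\<dots> = (\<Sum>j<r. \<Sum>b<s. A $$ (l, j * s + b) * w $ ((j * s + b) mod s))"
    by (rule sum_lessThan_mult_blocks)
  also have "\<dots> = (\<Sum>j<r. \<Sum>b<s. A $$ (c, ((j + r - i) mod r) * s + b) * w $ b)"
    using f a unfolding l_ia c_def by (intro sum.cong refl) auto
  also have "\<dots> = (\<Sum>b<s. \<Sum>j<r. A $$ (c, ((j + r - i) mod r) * s + b) * w $ b)"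
    by (rule sum.swap)
  also have "\<dots> = (\<Sum>b<s. \<Sum>j<r. A $$ (c, j * s + b) * w $ b)"
    by (intro sum.cong refl sum_lessThan_rotate[OF i])
  also have "\<dots> = (?B *\<^sub>v w) $ c"
    using c w by (simp add: first_row_block_sum_def scalar_prod_def lessThan_atLeast0 sum_distrib_right)
  also have "\<dots> = (?B *\<^sub>v w) $ a"
    using palindromic_mult_mat_vec[OF first_row_block_sum_carrier comm w pal] a
    unfolding palindromic_def c_def by (simp add: first_row_block_sum_def)
  finally show "(A *\<^sub>v tile_vec r s w) $ l = tile_vec r s (?B *\<^sub>v w) $ l"
    using l unfolding a_def by (simp add: tile_vec_def)
qed

lemma disoriented_block_circulant_pow_mult_tile_vec:
  assumes dis: "disoriented_block_circulant r s A"
    and comm: "first_row_block_sum r s A * antidiag s = antidiag s * first_row_block_sum r s A"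
    and "w \<in> carrier_vec s" and "palindromic w"
  shows "A ^\<^sub>m k *\<^sub>v tile_vec r s w = tile_vec r s (first_row_block_sum r s A ^\<^sub>m k *\<^sub>v w)"
  using assms(3,4)
proof (induction k arbitrary: w)
  case 0
  have "A \<in> carrier_mat (r * s) (r * s)"
    using dis unfolding disoriented_block_circulant_def by blast
  then show ?case using 0 by (simp add: first_row_block_sum_def one_mult_mat_vec[OF tile_vec_carrier])
next
  case (Suc k)
  let ?B = "first_row_block_sum r s A"
  have A: "A \<in> carrier_mat (r * s) (r * s)"
    using dis unfolding disoriented_block_circulant_def by blast
  have B: "?B \<in> carrier_mat s s" by (rule first_row_block_sum_carrier)
  have Bw: "?B *\<^sub>v w \<in> carrier_vec s" and pal_Bw: "palindromic (?B *\<^sub>v w)"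
    using Suc.prems palindromic_mult_mat_vec[OF B comm] B by auto
  have "A ^\<^sub>m Suc k *\<^sub>v tile_vec r s w = A ^\<^sub>m k *\<^sub>v (A *\<^sub>v tile_vec r s w)"
    using A by (simp add: assoc_mult_mat_vec[OF pow_carrier_mat[OF A] A tile_vec_carrier])
  also have "\<dots> = tile_vec r s (?B ^\<^sub>m k *\<^sub>v (?B *\<^sub>v w))"
    using disoriented_block_circulant_mult_tile_vec[OF dis comm Suc.prems] Suc.IH[OF Bw pal_Bw] by simp
  also have "?B ^\<^sub>m k *\<^sub>v (?B *\<^sub>v w) = ?B ^\<^sub>m Suc k *\<^sub>v w"
    using B Suc.prems by (simp add: assoc_mult_mat_vec[of _ s s _ s])
  finally show ?case .
qed

lemma disoriented_block_circulant_pow_row_sum: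
  assumes "disoriented_block_circulant r s A"
    and "first_row_block_sum r s A * antidiag s = antidiag s * first_row_block_sum r s A"
    and l: "l < r * s"
  shows "(A ^\<^sub>m k *\<^sub>v vec (r * s) (\<lambda>_. 1)) $ l
    = (first_row_block_sum r s A ^\<^sub>m k *\<^sub>v vec s (\<lambda>_. 1)) $ (l mod s)"
proof -
  have "s > 0" using l by (cases s) auto
  then have "tile_vec r s (vec s (\<lambda>_. 1)) = vec (r * s) (\<lambda>_. 1 :: real)"
    by (auto simp: tile_vec_def)
  then have "A ^\<^sub>m k *\<^sub>v vec (r * s) (\<lambda>_. 1)
      = tile_vec r s (first_row_block_sum r s A ^\<^sub>m k *\<^sub>v vec s (\<lambda>_. 1))"
    using disoriented_block_circulant_pow_mult_tile_vec[OF assms(1,2), of "vec s (\<lambda>_. 1)" k]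
    by (simp add: palindromic_def)
  then show ?thesis using l by (simp add: tile_vec_def)
qed

theorem lemma4p3:
  fixes r s :: nat and A :: "real mat"
  assumes "r \<ge> 1" and "s \<ge> 1"
    and "A \<in> carrier_mat (r*s) (r*s)"
    and "\<forall>i<r*s. \<forall>j<r*s. A $$ (i,j) \<ge> 0"
    and "disoriented_block_circulant r s A"
    and "first_row_block_sum r s A * antidiag s = antidiag s * first_row_block_sum r s A"
  shows "rho A = rho (first_row_block_sum r s A)"
proof -
  let ?B = "first_row_block_sum r s A"
  have A: "A \<in> carrier_mat (r * s) (r * s)" and B: "?B \<in> carrier_mat s s"
    using assms(3) first_row_block_sum_carrier by auto
  have s: "s > 0" and rs: "r * s > 0" using assms(1,2) by auto
  have nonneg_A: "nonneg_mat A" using assms(3,4) unfolding nonneg_mat_def by auto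
  note row_sums = disoriented_block_circulant_pow_row_sum[OF assms(5,6)]
  have "rho A \<le> rho ?B"
  proof (rule rho_le_if_pow_row_sums_le[OF A B rs s nonneg_A])
    fix k l assume "l < r * s"
    then show "\<exists>a<s. (A ^\<^sub>m k *\<^sub>v vec (r * s) (\<lambda>_. 1)) $ l \<le> (?B ^\<^sub>m k *\<^sub>v vec s (\<lambda>_. 1)) $ a"
      using row_sums s by (intro exI[of _ "l mod s"]) simp
  qed
  moreover have "rho ?B \<le> rho A"
  proof (rule rho_le_if_pow_row_sums_le[OF B A s rs nonneg_first_row_block_sum[OF A nonneg_A]])
    fix k a assume "a < s"
    then show "\<exists>l<r * s. (?B ^\<^sub>m k *\<^sub>v vec s (\<lambda>_. 1)) $ a \<le> (A ^\<^sub>m k *\<^sub>v vec (r * s) (\<lambda>_. 1)) $ l"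
      using row_sums[of a k] block_index_less[of 0 r a s] assms(1) by auto
  qed
  ultimately show ?thesis by simp
qed

end
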